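(* Let $1\le k<N$, let $\sigma_{k+1}$ be the $(k+1)$-th largest singular value of $\hat A$, and let $d_{\min}=\min_{x\in\mathcal X}d_x$. Let $f^*:\mathcal{X}\to\mathbb{R}^k$ be any minimizer of $\mathcal{L}_{\text{ACA-PC}}$ over all functions $\mathcal X\to\mathbb{R}^k$. Then for all $x_1,x_2\in\mathcal X$, $$d_{\text{post}}^2(x_1,x_2)-\frac{2\sigma_{k+1}^2}{d_{\min}}\big(1-\delta_{x_1x_2}\big)\;\le\;\|f^*(x_1)-f^*(x_2)\|_2^2\;\le\;d_{\text{post}}^2(x_1,x_2),$$ where $\delta_{x_1x_2}=1$ if $x_1=x_2$ and $0$ otherwise, and $$d_{\text{post}}^2(x_1,x_2)=\sum_{\bar x\in\bar{\mathcal X}}\big(p_{\mathcal A}(\bar x\mid x_1)-p_{\mathcal A}(\bar x\mid x_2)\big)^2,\qquad p_{\mathcal A}(\bar x\mid x)=\frac{p(x\mid\bar x)p(\bar x)}{p_{\mathcal A}(x)}.$$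
   Context: Setting: $\bar{\mathcal{X}}$ is a finite set of "natural data" with $|\bar{\mathcal X}|=N$, equipped with the uniform distribution $p(\bar x)=1/N$. $\mathcal{X}$ is a finite set of "augmented data" with $|\mathcal X|=L>N$. For each $\bar x\in\bar{\mathcal X}$, $p(\cdot\mid\bar x)$ is a probability distribution on $\mathcal X$ (the augmentation distribution). Let $A\in\mathbb{R}^{N\times L}$ with $A_{\bar x,x}=p(x\mid\bar x)$. For $x\in\mathcal X$ let $d_x=\sum_{\bar x\in\bar{\mathcal X}}p(x\mid\bar x)$, assumed $>0$ for all $x$, and $D=\operatorname{diag}(d_x)_{x\in\mathcal X}$. The normalized augmentation feature matrix is $\hat A=AD^{-1/2}\in\mathbb{R}^{N\times L}$. The marginal distribution of augmented data is $p_{\mathcal A}(x)=\sum_{\bar x}p(x\mid\bar x)p(\bar x)=d_x/N$. For $f:\mathcal X\to\mathbb{R}^k$, $$\mathcal{L}_{\text{ACA-PC}}(f)=-2\,\mathbb{E}_{\bar x\sim p(\bar x),\,x_i\sim p(\cdot\mid\bar x),\,x_j\sim p(\cdot\mid\bar x)}\big[f(x_i)^\top f(x_j)\big]+N\,\mathbb{E}_{x_1\sim p_{\mathcal A},\,x_2\sim p_{\mathcal A}}\Big[\big(f(x_1)^\top f(x_2)\big)^2\Big],$$ with $x_i,x_j$ independent given $\bar x$ and $x_1,x_2$ independent. (Minimizing over all functions corresponds to the paper's assumption that the encoder $f_\theta$ is universal.) *)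

theory Defs
  imports Complex_Main "HOL-Library.Multiset" "Jordan_Normal_Form.Char_Poly"
begin

text \<open>Conventions. Natural data are indexed by {0..<N}, augmented data by {0..<L}.
  P xb x = p(x | xb). Functions f : X -> R^k are represented as f x j, j < k.\<close>

definition deg :: "nat \<Rightarrow> (nat \<Rightarrow> nat \<Rightarrow> real) \<Rightarrow> nat \<Rightarrow> real" where
  "deg N P x = (\<Sum>xb<N. P xb x)"

definition aug_feature :: "nat \<Rightarrow> nat \<Rightarrow> (nat \<Rightarrow> nat \<Rightarrow> real) \<Rightarrow> real mat" where
  "aug_feature N L P = mat N L (\<lambda>(xb, x). P xb x)"

definition norm_aug_feature :: "nat \<Rightarrow> nat \<Rightarrow> (nat \<Rightarrow> nat \<Rightarrow> real) \<Rightarrow> real mat" where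
  "norm_aug_feature N L P =
     aug_feature N L P * mat L L (\<lambda>(i, j). if i = j then 1 / sqrt (deg N P i) else 0)"

definition singular_values :: "real mat \<Rightarrow> real list" where
  "singular_values M =
     (let G = (if dim_row M \<le> dim_col M then M * transpose_mat M else transpose_mat M * M)
      in map sqrt (rev (sorted_list_of_multiset (proots (char_poly G)))))"

definition p_bar :: "nat \<Rightarrow> nat \<Rightarrow> real" where
  "p_bar N xb = 1 / real N"

definition p_A :: "nat \<Rightarrow> (nat \<Rightarrow> nat \<Rightarrow> real) \<Rightarrow> nat \<Rightarrow> real" where
  "p_A N P x = (\<Sum>xb<N. P xb x * p_bar N xb)"

definition post :: "nat \<Rightarrow> (nat \<Rightarrow> nat \<Rightarrow> real) \<Rightarrow> nat \<Rightarrow> nat \<Rightarrow> real" where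
  "post N P xb x = P xb x * p_bar N xb / p_A N P x"

definition d_post_sq :: "nat \<Rightarrow> (nat \<Rightarrow> nat \<Rightarrow> real) \<Rightarrow> nat \<Rightarrow> nat \<Rightarrow> real" where
  "d_post_sq N P x1 x2 = (\<Sum>xb<N. (post N P xb x1 - post N P xb x2)^2)"

definition inner_k :: "nat \<Rightarrow> (nat \<Rightarrow> nat \<Rightarrow> real) \<Rightarrow> nat \<Rightarrow> nat \<Rightarrow> real" where
  "inner_k k f x y = (\<Sum>j<k. f x j * f y j)"

definition loss_ACA_PC ::
  "nat \<Rightarrow> nat \<Rightarrow> nat \<Rightarrow> (nat \<Rightarrow> nat \<Rightarrow> real) \<Rightarrow> (nat \<Rightarrow> nat \<Rightarrow> real) \<Rightarrow> real" where
  "loss_ACA_PC N L k P f =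
     - 2 * (\<Sum>xb<N. \<Sum>xi<L. \<Sum>xj<L. p_bar N xb * P xb xi * P xb xj * inner_k k f xi xj)
     + real N * (\<Sum>x1<L. \<Sum>x2<L. p_A N P x1 * p_A N P x2 * (inner_k k f x1 x2)^2)"

end

theory Submission
  imports
    Defs
    "HOL-Computational_Algebra.Fundamental_Theorem_Algebra"
    "HOL-Combinatorics.Permutations"
begin

text \<open>
  Rescale an embedding to g(x) = sqrt(d_x) f(x) and let M = Ahat^T Ahat. Up to a positive factor
  and an additive constant, the ACA-PC loss of f is the squared Frobenius distance between M and
  the Gram matrix g g^T, so g* = sqrt(D) f* is a best approximation of M by Gram matrices of rank
  at most k. First and second order optimality of g* show that the residual R = M - g* g*^T is
  positive semidefinite, and that for an eigenvector r of R with eigenvalue rho > 0 every u in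
  the span of r and the k columns of g* satisfies rho |Ahat u|^2 <= |M u|^2; as this span has
  dimension k + 1, the min-max principle gives rho <= sigma_(k+1)^2. Finally, for
  v = e_x1 / sqrt(d_x1) - e_x2 / sqrt(d_x2) one has v^T M v = d_post^2(x1, x2),
  v^T g* g*^T v = |f*(x1) - f*(x2)|^2 and |v|^2 <= 2 / d_min.
\<close>

section \<open>Orthonormal families and the spectral theorem\<close>

text \<open>Vectors of \<open>\<real>\<^sup>n\<close> are functions \<open>nat \<Rightarrow> real\<close> read on \<open>{..<n}\<close>, square matrices are
  functions \<open>nat \<Rightarrow> nat \<Rightarrow> real\<close>, and a family of \<open>m\<close> vectors is \<open>q :: nat \<Rightarrow> nat \<Rightarrow> real\<close>
  with members \<open>q i\<close>, \<open>i < m\<close>.\<close>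

definition orthonormal :: "nat \<Rightarrow> nat \<Rightarrow> (nat \<Rightarrow> nat \<Rightarrow> real) \<Rightarrow> bool" where
  "orthonormal n m q \<longleftrightarrow> (\<forall>i<m. \<forall>j<m. (\<Sum>a<n. q i a * q j a) = (if i = j then 1 else 0))"

lemma sum_mult_sum_swap:
  "(\<Sum>a\<in>A. f a * (\<Sum>c\<in>C. g a c)) = (\<Sum>c\<in>C. \<Sum>a\<in>A. f a * (g a c :: real))"
  by (simp add: sum_distrib_left sum.swap[of _ A C])

lemma gram_bilinear_form:
  fixes F :: "'b \<Rightarrow> 'a \<Rightarrow> real"
  shows "(\<Sum>x\<in>X. u x * (\<Sum>y\<in>Y. (\<Sum>b\<in>B. F b x * F b y) * w y))
       = (\<Sum>b\<in>B. (\<Sum>x\<in>X. F b x * u x) * (\<Sum>y\<in>Y. F b y * w y))"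
proof -
  have "(\<Sum>x\<in>X. u x * (\<Sum>y\<in>Y. (\<Sum>b\<in>B. F b x * F b y) * w y))
      = (\<Sum>x\<in>X. \<Sum>y\<in>Y. \<Sum>b\<in>B. (F b x * u x) * (F b y * w y))"
    by (simp add: sum_distrib_left sum_distrib_right mult_ac)
  also have "\<dots> = (\<Sum>b\<in>B. \<Sum>x\<in>X. \<Sum>y\<in>Y. (F b x * u x) * (F b y * w y))"
    by (subst sum.swap) (simp only: sum.swap[of _ Y B])
  also have "\<dots> = (\<Sum>b\<in>B. (\<Sum>x\<in>X. F b x * u x) * (\<Sum>y\<in>Y. F b y * w y))"
    by (simp only: sum_product)
  finally show ?thesis .
qed

lemma exists_nonzero_kernel_vector:
  fixes A :: "nat \<Rightarrow> nat \<Rightarrow> real"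
  assumes "m < n"
  shows "\<exists>x. (\<exists>a<n. x a \<noteq> 0) \<and> (\<forall>i<m. (\<Sum>a<n. A i a * x a) = 0)"
proof -
  define B where "B = mat n n (\<lambda>(i,a). if i < m then A i a else 0)"
  have B: "B \<in> carrier_mat n n" unfolding B_def by auto
  have "B = mat\<^sub>r n n (\<lambda>i. if i = n - 1 then 0\<^sub>v n else row B i)"
    by (rule eq_matI) (use assms in \<open>auto simp: B_def\<close>)
  then have "det B = 0" using det_row_0[of "n - 1" n "\<lambda>i. row B i"] assms B by auto
  then obtain v where v: "v \<in> carrier_vec n" "v \<noteq> 0\<^sub>v n" "B *\<^sub>v v = 0\<^sub>v n"
    using det_0_iff_vec_prod_zero_field[OF B] by auto
  have "\<exists>a<n. v $ a \<noteq> 0" using v by (metis carrier_vecD eq_vecI index_zero_vec(1,2))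
  moreover have "(\<Sum>a<n. A i a * v $ a) = 0" if "i < m" for i
  proof -
    have "(B *\<^sub>v v) $ i = (\<Sum>a<n. A i a * v $ a)" using that assms v(1) unfolding B_def
      by (auto simp: scalar_prod_def lessThan_atLeast0 intro: sum.cong)
    then show ?thesis using v(3) that assms by simp
  qed
  ultimately show ?thesis by blast
qed

lemma sum_squares_pos:
  fixes v :: "nat \<Rightarrow> real"
  assumes "j < n" "v j \<noteq> 0"
  shows "0 < (\<Sum>i<n. v i * v i)"
proof (rule sum_pos2[of _ j])
  show "0 < v j * v j" using assms(2) by (metis not_real_square_gt_zero)
qed (use assms(1) in auto)

lemma exists_normalizing_scalar:
  fixes z :: "nat \<Rightarrow> real"
  assumes "\<exists>a<n. z a \<noteq> 0"
  shows "\<exists>c>0. (\<Sum>a<n. (z a / c) * (z a / c)) = 1"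
proof -
  define s where "s = (\<Sum>a<n. z a * z a)"
  have "s > 0" unfolding s_def using assms sum_squares_pos by blast
  moreover have "(\<Sum>a<n. (z a / sqrt s) * (z a / sqrt s)) = s / (sqrt s * sqrt s)"
    unfolding s_def by (simp add: sum_divide_distrib)
  ultimately show ?thesis by (intro exI[of _ "sqrt s"]) auto
qed

lemma exists_unit_vector_orthogonal:
  fixes q :: "nat \<Rightarrow> nat \<Rightarrow> real"
  assumes "m < n"
  shows "\<exists>u. (\<forall>i<m. (\<Sum>a<n. q i a * u a) = 0) \<and> (\<Sum>a<n. u a * u a) = 1"
proof -
  obtain x where x: "\<exists>a<n. x a \<noteq> 0" "\<forall>i<m. (\<Sum>a<n. q i a * x a) = 0"
    using exists_nonzero_kernel_vector[OF assms] by blast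
  obtain c where "c > 0" "(\<Sum>a<n. (x a / c) * (x a / c)) = 1"
    using exists_normalizing_scalar[OF x(1)] by blast
  moreover have "(\<Sum>a<n. q i a * (x a / c)) = (\<Sum>a<n. q i a * x a) / c" for i
    by (simp add: sum_divide_distrib)
  ultimately show ?thesis using x(2) by (intro exI[of _ "\<lambda>a. x a / c"]) auto
qed

lemma orthonormal_snoc:
  assumes q: "orthonormal n m q" and u: "\<forall>i<m. (\<Sum>a<n. q i a * u a) = 0" "(\<Sum>a<n. u a * u a) = 1"
  shows "orthonormal n (Suc m) (q(m := u))"
  unfolding orthonormal_def
proof (intro allI impI)
  fix i j assume "i < Suc m" "j < Suc m"
  moreover have "(\<Sum>a<n. u a * q j a) = 0" if "j < m" for j
    using u(1) that by (simp add: mult.commute)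
  ultimately show "(\<Sum>a<n. (q(m := u)) i a * (q(m := u)) j a) = (if i = j then 1 else 0)"
    using q u unfolding orthonormal_def by (auto simp: less_Suc_eq)
qed

lemma orthonormal_extend:
  assumes "orthonormal n m q" "m \<le> n"
  shows "\<exists>q'. (\<forall>i<m. q' i = q i) \<and> orthonormal n n q'"
  using assms
proof (induction "n - m" arbitrary: m q)
  case 0
  then show ?case by (intro exI[of _ q]) auto
next
  case (Suc d)
  then have "m < n" by auto
  then obtain u where u: "\<forall>i<m. (\<Sum>a<n. q i a * u a) = 0" "(\<Sum>a<n. u a * u a) = 1"
    using exists_unit_vector_orthogonal by blast
  have "\<exists>q'. (\<forall>i<Suc m. q' i = (q(m := u)) i) \<and> orthonormal n n q'"
    using Suc.hyps(2) orthonormal_snoc[OF Suc.prems(1) u] \<open>m < n\<close>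
    by (intro Suc.hyps(1)) (auto simp del: fun_upd_apply)
  then obtain q' where "\<forall>i<Suc m. q' i = (q(m := u)) i" "orthonormal n n q'"
    by blast
  then show ?case by (intro exI[of _ q']) auto
qed

lemma orthonormal_columns:
  assumes "orthonormal n n q" "a < n" "b < n"
  shows "(\<Sum>i<n. q i a * q i b) = (if a = b then 1 else 0)"
proof -
  define Q where "Q = mat n n (\<lambda>(a,i). q i a)"
  have Q: "Q \<in> carrier_mat n n" "transpose_mat Q \<in> carrier_mat n n" unfolding Q_def by auto
  have "transpose_mat Q * Q = 1\<^sub>m n"
    using assms(1) unfolding orthonormal_def Q_def
    by (intro eq_matI) (auto simp: scalar_prod_def lessThan_atLeast0 intro!: sum.cong)
  then have "Q * transpose_mat Q = 1\<^sub>m n" using mat_mult_left_right_inverse[OF Q(2,1)] by auto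
  moreover have "(Q * transpose_mat Q) $$ (a,b) = (\<Sum>i<n. q i a * q i b)"
    using assms unfolding Q_def by (auto simp: scalar_prod_def lessThan_atLeast0 intro!: sum.cong)
  ultimately show ?thesis using assms by auto
qed

lemma orthonormal_expansion:
  assumes "orthonormal n n q" "a < n"
  shows "x a = (\<Sum>i<n. (\<Sum>b<n. q i b * x b) * q i a)"
proof -
  have "(\<Sum>i<n. (\<Sum>b<n. q i b * x b) * q i a) = (\<Sum>i<n. \<Sum>b<n. x b * (q i b * q i a))"
    by (simp add: sum_distrib_right sum_distrib_left mult_ac)
  also have "\<dots> = (\<Sum>b<n. x b * (\<Sum>i<n. q i b * q i a))"
    by (subst sum.swap) (simp add: sum_distrib_left)
  also have "\<dots> = (\<Sum>b<n. if b = a then x b else 0)"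
    using orthonormal_columns[OF assms(1) _ assms(2)] by (intro sum.cong) auto
  also have "\<dots> = x a"
    using assms(2) by simp
  finally show ?thesis by simp
qed

lemma orthonormal_coefficients:
  assumes "orthonormal n n q" "m \<le> n" "i < n"
  shows "(\<Sum>a<n. q i a * (\<Sum>c<n - m. y c * q (m + c) a)) = (if m \<le> i then y (i - m) else 0)"
proof -
  have "(\<Sum>a<n. q i a * (\<Sum>c<n - m. y c * q (m + c) a))
      = (\<Sum>c<n - m. \<Sum>a<n. q i a * (y c * q (m + c) a))"
    by (rule sum_mult_sum_swap)
  also have "\<dots> = (\<Sum>c<n - m. y c * (\<Sum>a<n. q i a * q (m + c) a))"
    by (simp add: sum_distrib_left mult_ac)
  also have "\<dots> = (\<Sum>c<n - m. if c = i - m \<and> m \<le> i then y c else 0)"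
    using assms unfolding orthonormal_def by (intro sum.cong) auto
  also have "\<dots> = (if m \<le> i then y (i - m) else 0)"
    using assms(3) by auto
  finally show ?thesis .
qed

lemma real_matrix_has_complex_eigenvector:
  fixes S :: "nat \<Rightarrow> nat \<Rightarrow> real"
  assumes "0 < n"
  shows "\<exists>z v. (\<exists>a<n. v a \<noteq> 0) \<and> (\<forall>a<n. (\<Sum>b<n. complex_of_real (S a b) * v b) = z * v a)"
proof -
  define A :: "complex mat" where "A = mat n n (\<lambda>(a,b). complex_of_real (S a b))"
  have A: "A \<in> carrier_mat n n" unfolding A_def by auto
  have "degree (char_poly A) = n" using degree_monic_char_poly[OF A] by auto
  then have "\<not> constant (poly (char_poly A))" using assms by (simp add: constant_degree)
  then obtain z where "poly (char_poly A) z = 0" using fundamental_theorem_of_algebra by blast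
  then have "eigenvalue A z" using eigenvalue_root_char_poly[OF A] by auto
  then obtain v where "v \<in> carrier_vec n" "v \<noteq> 0\<^sub>v n" "A *\<^sub>v v = z \<cdot>\<^sub>v v"
    unfolding eigenvalue_def eigenvector_def using A by auto
  moreover have "(A *\<^sub>v v) $ a = (\<Sum>b<n. complex_of_real (S a b) * v $ b)"
    if "a < n" "v \<in> carrier_vec n" for a
    using that unfolding A_def by (auto simp: scalar_prod_def lessThan_atLeast0 intro: sum.cong)
  ultimately show ?thesis
    by (intro exI[of _ z] exI[of _ "\<lambda>a. v $ a"])
      (metis carrier_vecD eq_vecI index_smult_vec(1) index_zero_vec(1,2))
qed

lemma symmetric_complex_eigenvalue_real:
  fixes S :: "nat \<Rightarrow> nat \<Rightarrow> real"
  assumes sym: "\<And>a b. a < n \<Longrightarrow> b < n \<Longrightarrow> S a b = S b a"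
    and v: "\<exists>a<n. v a \<noteq> 0" and eig: "\<forall>a<n. (\<Sum>b<n. complex_of_real (S a b) * v b) = z * v a"
  shows "Im z = 0"
proof -
  define X where "X = (\<Sum>a<n. \<Sum>b<n. complex_of_real (S a b) * cnj (v a) * v b)"
  define r where "r = (\<Sum>a<n. (cmod (v a))\<^sup>2)"
  obtain a0 where "a0 < n" "v a0 \<noteq> 0" using v by blast
  then have "r > 0" unfolding r_def by (intro sum_pos2[of _ a0]) auto
  have "X = (\<Sum>a<n. cnj (v a) * (\<Sum>b<n. complex_of_real (S a b) * v b))"
    unfolding X_def by (auto simp: sum_distrib_left mult_ac intro!: sum.cong)
  also have "\<dots> = z * (\<Sum>a<n. v a * cnj (v a))"
    using eig by (simp add: sum_distrib_left mult_ac)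
  also have "\<dots> = z * complex_of_real r"
    unfolding r_def by (simp only: of_real_sum complex_norm_square)
  finally have X: "X = z * complex_of_real r" .
  have "cnj X = (\<Sum>a<n. \<Sum>b<n. complex_of_real (S a b) * v a * cnj (v b))"
    unfolding X_def by simp
  also have "\<dots> = (\<Sum>b<n. \<Sum>a<n. complex_of_real (S a b) * v a * cnj (v b))"
    by (rule sum.swap)
  also have "\<dots> = X" unfolding X_def by (auto simp: sym mult_ac intro!: sum.cong)
  finally have "cnj z * complex_of_real r = z * complex_of_real r"
    using X by (metis complex_cnj_complex_of_real complex_cnj_mult)
  then have "cnj z = z" using \<open>r > 0\<close> by simp
  then show ?thesis by (simp add: complex_eq_iff)
qed

lemma symmetric_has_real_eigenvector:
  fixes S :: "nat \<Rightarrow> nat \<Rightarrow> real"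
  assumes "0 < n" and sym: "\<And>a b. a < n \<Longrightarrow> b < n \<Longrightarrow> S a b = S b a"
  shows "\<exists>\<mu> x. (\<exists>a<n. x a \<noteq> 0) \<and> (\<forall>a<n. (\<Sum>b<n. S a b * x b) = \<mu> * x a)"
proof -
  obtain z v where v: "\<exists>a<n. v a \<noteq> 0"
    and eig: "\<forall>a<n. (\<Sum>b<n. complex_of_real (S a b) * v b) = z * v a"
    using real_matrix_has_complex_eigenvector[OF assms(1)] by blast
  have "Im z = 0" by (rule symmetric_complex_eigenvalue_real[OF sym v eig])
  then have re: "(\<Sum>b<n. S a b * Re (v b)) = Re z * Re (v a)"
    and im: "(\<Sum>b<n. S a b * Im (v b)) = Re z * Im (v a)" if "a < n" for a
    using arg_cong[OF eig[rule_format, OF that], of Re] arg_cong[OF eig[rule_format, OF that], of Im]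
    by (simp_all add: Re_sum Im_sum)
  obtain a0 where a0: "a0 < n" "v a0 \<noteq> 0" using v by blast
  show ?thesis
  proof (cases "Re (v a0) = 0")
    case True
    then have "Im (v a0) \<noteq> 0" using a0(2) by (simp add: complex_eq_iff)
    then show ?thesis using a0(1) im by (intro exI[of _ "Re z"] exI[of _ "\<lambda>b. Im (v b)"]) auto
  next
    case False
    then show ?thesis using a0(1) re by (intro exI[of _ "Re z"] exI[of _ "\<lambda>b. Re (v b)"]) auto
  qed
qed

lemma symmetric_bilinear_commute:
  fixes S :: "nat \<Rightarrow> nat \<Rightarrow> real"
  assumes sym: "\<And>a b. a < n \<Longrightarrow> b < n \<Longrightarrow> S a b = S b a"
  shows "(\<Sum>a<n. u a * (\<Sum>b<n. S a b * v b)) = (\<Sum>a<n. v a * (\<Sum>b<n. S a b * u b))"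
proof -
  have "(\<Sum>a<n. u a * (\<Sum>b<n. S a b * v b)) = (\<Sum>a<n. \<Sum>b<n. v b * (S b a * u a))"
    using sym by (auto simp: sum_distrib_left mult_ac intro!: sum.cong)
  also have "\<dots> = (\<Sum>a<n. v a * (\<Sum>b<n. S a b * u b))"
    by (subst sum.swap) (simp add: sum_distrib_left)
  finally show ?thesis .
qed

lemma symmetric_inner_eigenvector:
  fixes S :: "nat \<Rightarrow> nat \<Rightarrow> real"
  assumes sym: "\<And>a b. a < n \<Longrightarrow> b < n \<Longrightarrow> S a b = S b a"
    and eig: "\<forall>a<n. (\<Sum>b<n. S a b * v b) = \<mu> * v a"
  shows "(\<Sum>a<n. v a * (\<Sum>b<n. S a b * z b)) = \<mu> * (\<Sum>a<n. v a * z a)"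
proof -
  have "(\<Sum>a<n. v a * (\<Sum>b<n. S a b * z b)) = (\<Sum>a<n. z a * (\<Sum>b<n. S a b * v b))"
    by (rule symmetric_bilinear_commute[OF sym])
  also have "\<dots> = \<mu> * (\<Sum>a<n. v a * z a)"
    using eig by (simp add: sum_distrib_left mult_ac)
  finally show ?thesis .
qed

lemma symmetric_eigenvector_orthogonal:
  fixes S q :: "nat \<Rightarrow> nat \<Rightarrow> real" and l :: "nat \<Rightarrow> real"
  assumes sym: "\<And>a b. a < n \<Longrightarrow> b < n \<Longrightarrow> S a b = S b a"
    and q: "orthonormal n m q" and "m < n"
    and eig: "\<And>i a. i < m \<Longrightarrow> a < n \<Longrightarrow> (\<Sum>b<n. S a b * q i b) = l i * q i a"
  shows "\<exists>u \<mu>. (\<forall>i<m. (\<Sum>a<n. q i a * u a) = 0) \<and> (\<Sum>a<n. u a * u a) = 1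
          \<and> (\<forall>a<n. (\<Sum>b<n. S a b * u b) = \<mu> * u a)"
proof -
  obtain q' where q'q: "\<forall>i<m. q' i = q i" and q': "orthonormal n n q'"
    using orthonormal_extend[OF q] \<open>m < n\<close> by auto
  \<comment> \<open>restriction of \<open>S\<close> to the span of \<open>q' m, \<dots>, q' (n - 1)\<close>, in that basis\<close>
  define T where "T c d = (\<Sum>a<n. q' (m + c) a * (\<Sum>b<n. S a b * q' (m + d) b))" for c d
  have "T c d = T d c" if "c < n - m" "d < n - m" for c d
    unfolding T_def by (rule symmetric_bilinear_commute[OF sym])
  then obtain \<mu> y where y: "\<exists>c<n - m. y c \<noteq> 0" "\<forall>c<n - m. (\<Sum>d<n - m. T c d * y d) = \<mu> * y c"
    using symmetric_has_real_eigenvector[of "n - m" T] \<open>m < n\<close> by auto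
  define z where "z a = (\<Sum>c<n - m. y c * q' (m + c) a)" for a
  have cz: "(\<Sum>a<n. q' i a * z a) = (if m \<le> i then y (i - m) else 0)" if "i < n" for i
    unfolding z_def using orthonormal_coefficients[OF q'] \<open>m < n\<close> that by simp
  have cw: "(\<Sum>a<n. q' i a * (\<Sum>b<n. S a b * z b)) = \<mu> * (\<Sum>a<n. q' i a * z a)" if "i < n" for i
  proof (cases "m \<le> i")
    case False
    then have "(\<Sum>a<n. q' i a * (\<Sum>b<n. S a b * z b)) = l i * (\<Sum>a<n. q' i a * z a)"
      using q'q eig by (intro symmetric_inner_eigenvector[OF sym]) auto
    then show ?thesis using cz[OF that] False by simp
  next
    case True
    have "(\<Sum>a<n. q' i a * (\<Sum>b<n. S a b * z b)) = (\<Sum>d<n - m. T (i - m) d * y d)"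
      unfolding T_def z_def using True
      by (simp add: sum_distrib_left sum_distrib_right mult_ac sum.swap[of _ "{..<n}" "{..<n - m}"])
    then show ?thesis using y(2) cz[OF that] True that by auto
  qed
  have Sz: "(\<Sum>b<n. S a b * z b) = \<mu> * z a" if "a < n" for a
  proof -
    have "(\<Sum>b<n. S a b * z b) = (\<Sum>i<n. (\<Sum>c<n. q' i c * (\<Sum>b<n. S c b * z b)) * q' i a)"
      by (rule orthonormal_expansion[OF q' that])
    also have "\<dots> = (\<Sum>i<n. \<mu> * ((\<Sum>c<n. q' i c * z c) * q' i a))"
      by (intro sum.cong refl) (simp add: cw)
    also have "\<dots> = \<mu> * (\<Sum>i<n. (\<Sum>c<n. q' i c * z c) * q' i a)"
      by (simp only: sum_distrib_left)
    also have "\<dots> = \<mu> * z a"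
      using orthonormal_expansion[OF q' that, of z] by simp
    finally show ?thesis .
  qed
  obtain c0 where "c0 < n - m" "y c0 \<noteq> 0" using y(1) by blast
  then have "(\<Sum>a<n. q' (m + c0) a * z a) \<noteq> 0" using cz[of "m + c0"] by simp
  then have "\<exists>a<n. z a \<noteq> 0" by (metis (no_types, lifting) mult_zero_right lessThan_iff sum.neutral)
  then obtain c where c: "c > 0" "(\<Sum>a<n. (z a / c) * (z a / c)) = 1"
    using exists_normalizing_scalar by blast
  have "(\<Sum>a<n. q i a * (z a / c)) = 0" if "i < m" for i
    using cz[of i] q'q that \<open>m < n\<close> by (simp add: sum_divide_distrib[symmetric])
  moreover have "(\<Sum>b<n. S a b * (z b / c)) = \<mu> * (z a / c)" if "a < n" for a
    using Sz[OF that] by (simp add: sum_divide_distrib[symmetric])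
  ultimately show ?thesis using c(2) by (intro exI[of _ "\<lambda>a. z a / c"] exI[of _ \<mu>]) auto
qed

theorem symmetric_spectral_decomposition:
  fixes S :: "nat \<Rightarrow> nat \<Rightarrow> real"
  assumes sym: "\<And>a b. a < n \<Longrightarrow> b < n \<Longrightarrow> S a b = S b a"
  shows "\<exists>q l. orthonormal n n q \<and> (\<forall>i<n. \<forall>a<n. (\<Sum>b<n. S a b * q i b) = l i * q i a)"
proof -
  have "\<exists>q l. orthonormal n m q \<and> (\<forall>i<m. \<forall>a<n. (\<Sum>b<n. S a b * q i b) = l i * q i a)"
    if "m \<le> n" for m
    using that
  proof (induction m)
    case 0
    then show ?case by (auto simp: orthonormal_def)
  next
    case (Suc m)
    then obtain q l where q: "orthonormal n m q"
      and eig: "\<forall>i<m. \<forall>a<n. (\<Sum>b<n. S a b * q i b) = l i * q i a"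
      by auto
    obtain u \<mu> where u: "\<forall>i<m. (\<Sum>a<n. q i a * u a) = 0" "(\<Sum>a<n. u a * u a) = 1"
      and eig_u: "\<forall>a<n. (\<Sum>b<n. S a b * u b) = \<mu> * u a"
      using symmetric_eigenvector_orthogonal[where S = S and l = l, OF sym q] eig Suc.prems by auto
    show ?case
      by (intro exI[of _ "q(m := u)"] exI[of _ "l(m := \<mu>)"] conjI orthonormal_snoc[OF q u])
        (use eig eig_u in \<open>auto simp: less_Suc_eq\<close>)
  qed
  then show ?thesis by blast
qed

lemma orthonormal_quadratic_form:
  fixes S q :: "nat \<Rightarrow> nat \<Rightarrow> real"
  assumes q: "orthonormal n n q" and eig: "\<forall>i<n. \<forall>a<n. (\<Sum>b<n. S a b * q i b) = l i * q i a"
  shows "(\<Sum>a<n. v a * (\<Sum>b<n. S a b * v b)) = (\<Sum>i<n. l i * (\<Sum>a<n. q i a * v a)^2)"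
proof -
  define c where "c i = (\<Sum>a<n. q i a * v a)" for i
  have "(\<Sum>b<n. S a b * v b) = (\<Sum>i<n. c i * l i * q i a)" if "a < n" for a
  proof -
    have "(\<Sum>b<n. S a b * v b) = (\<Sum>b<n. S a b * (\<Sum>i<n. c i * q i b))"
      unfolding c_def using orthonormal_expansion[OF q] by (auto intro!: sum.cong)
    also have "\<dots> = (\<Sum>i<n. \<Sum>b<n. S a b * (c i * q i b))"
      by (rule sum_mult_sum_swap)
    also have "\<dots> = (\<Sum>i<n. c i * (\<Sum>b<n. S a b * q i b))"
      by (simp add: sum_distrib_left mult_ac)
    finally show ?thesis using eig that by (simp add: mult_ac)
  qed
  then have "(\<Sum>a<n. v a * (\<Sum>b<n. S a b * v b)) = (\<Sum>a<n. v a * (\<Sum>i<n. c i * l i * q i a))"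
    by simp
  also have "\<dots> = (\<Sum>i<n. \<Sum>a<n. v a * (c i * l i * q i a))"
    by (rule sum_mult_sum_swap)
  also have "\<dots> = (\<Sum>i<n. l i * (c i)^2)"
    unfolding c_def by (simp add: sum_distrib_left power2_eq_square mult_ac)
  finally show ?thesis unfolding c_def .
qed

lemma orthonormal_norm_square:
  assumes q: "orthonormal n n q"
  shows "(\<Sum>a<n. v a * v a) = (\<Sum>i<n. (\<Sum>a<n. q i a * v a)^2)"
proof -
  have "(\<Sum>a<n. v a * v a) = (\<Sum>a<n. v a * (\<Sum>i<n. (\<Sum>b<n. q i b * v b) * q i a))"
    using orthonormal_expansion[OF q] by (auto intro!: sum.cong)
  also have "\<dots> = (\<Sum>i<n. \<Sum>a<n. v a * ((\<Sum>b<n. q i b * v b) * q i a))"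
    by (rule sum_mult_sum_swap)
  also have "\<dots> = (\<Sum>i<n. (\<Sum>a<n. q i a * v a)^2)"
    by (simp add: sum_distrib_left sum_distrib_right power2_eq_square mult_ac)
  finally show ?thesis .
qed

lemma char_poly_orthonormal_eigenbasis:
  fixes S q :: "nat \<Rightarrow> nat \<Rightarrow> real"
  assumes q: "orthonormal n n q" and eig: "\<forall>i<n. \<forall>a<n. (\<Sum>b<n. S a b * q i b) = l i * q i a"
  shows "char_poly (mat n n (\<lambda>(a,b). S a b)) = (\<Prod>i\<leftarrow>[0..<n]. [:- l i, 1:])"
proof -
  define Q where "Q = mat n n (\<lambda>(a,i). q i a)"
  define D where "D = mat n n (\<lambda>(i,j). if i = j then l i else 0)"
  have Q: "Q \<in> carrier_mat n n" "transpose_mat Q \<in> carrier_mat n n" and D: "D \<in> carrier_mat n n"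
    unfolding Q_def D_def by auto
  have QtQ: "transpose_mat Q * Q = 1\<^sub>m n"
    using q unfolding orthonormal_def Q_def
    by (intro eq_matI) (auto simp: scalar_prod_def lessThan_atLeast0 intro!: sum.cong)
  then have QQt: "Q * transpose_mat Q = 1\<^sub>m n" using mat_mult_left_right_inverse[OF Q(2,1)] by auto
  have "(Q * D * transpose_mat Q) $$ (a, b) = S a b" if "a < n" "b < n" for a b
  proof -
    have "(Q * D) $$ (a, i) = q i a * l i" if "i < n" for i
      using that \<open>a < n\<close> unfolding Q_def D_def
      by (auto simp: scalar_prod_def lessThan_atLeast0 if_distrib[of "\<lambda>x. _ * x"] cong: if_cong)
    then have "(Q * D * transpose_mat Q) $$ (a, b) = (\<Sum>i<n. (\<Sum>c<n. q i c * S a c) * q i b)"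
      using that eig Q D unfolding Q_def
      by (auto simp: scalar_prod_def lessThan_atLeast0 mult.commute intro!: sum.cong)
    also have "\<dots> = S a b" by (rule orthonormal_expansion[OF q \<open>b < n\<close>, symmetric])
    finally show ?thesis .
  qed
  then have "mat n n (\<lambda>(a,b). S a b) = Q * D * transpose_mat Q"
    using Q D by (intro eq_matI) auto
  then have "similar_mat (mat n n (\<lambda>(a,b). S a b)) D"
    unfolding similar_mat_def similar_mat_wit_def using Q D QQt QtQ
    by (intro exI[of _ Q] exI[of _ "transpose_mat Q"]) (auto simp: Let_def)
  then have "char_poly (mat n n (\<lambda>(a,b). S a b)) = char_poly D" by (rule char_poly_similar)
  also have "\<dots> = (\<Prod>a\<leftarrow>diag_mat D. [:- a, 1:])"
    by (rule char_poly_upper_triangular[OF D]) (auto simp: upper_triangular_def D_def)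
  also have "diag_mat D = map l [0..<n]"
    unfolding diag_mat_def D_def by (auto intro: map_cong)
  finally show ?thesis by (simp add: comp_def)
qed

section \<open>Best approximation by low-rank Gram matrices\<close>

lemma nonneg_quartic_coeffs:
  fixes b1 b2 b3 b4 :: real
  assumes nonneg: "\<And>t. 0 \<le> b1 * t + b2 * t^2 + b3 * t^3 + b4 * t^4"
  shows "b1 = 0" and "0 \<le> b2"
proof -
  define h1 where "h1 t = b1 + b2 * t + b3 * t^2 + b4 * t^3" for t
  define h2 where "h2 t = b2 + b3 * t + b4 * t^2" for t
  have h1: "(h1 \<longlongrightarrow> b1) (at 0)" and h2: "(h2 \<longlongrightarrow> b2) (at 0)"
    unfolding h1_def h2_def by (rule tendsto_eq_intros | simp)+
  have "0 \<le> t * h1 t" for t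
    using nonneg[of t] by (simp add: h1_def algebra_simps power2_eq_square power3_eq_cube power4_eq_xxxx)
  then have right: "0 \<le> h1 t" if "0 < t" for t
    using that by (meson zero_le_mult_iff not_less)
  have left: "h1 t \<le> 0" if "t < 0" for t
    using that \<open>\<And>t. 0 \<le> t * h1 t\<close>[of t] by (meson zero_le_mult_iff not_less)
  have "0 \<le> b1"
    using h1 right by (intro tendsto_lowerbound[of h1 b1 "at_right 0"])
      (auto intro: filterlim_mono[OF _ order_refl at_le] eventually_mono[OF eventually_at_right_less])
  moreover have "b1 \<le> 0"
    using h1 left by (intro tendsto_upperbound[of h1 b1 "at_left 0"])
      (auto intro: filterlim_mono[OF _ order_refl at_le] eventually_mono[OF eventually_at_left_real[of "-1" 0]])
  ultimately show b1: "b1 = 0" by simp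
  have "0 \<le> t^2 * h2 t" for t
    using nonneg[of t] by (simp add: h2_def b1 algebra_simps power2_eq_square power3_eq_cube power4_eq_xxxx)
  then have "h2 t \<ge> 0" if "t \<noteq> 0" for t
    using that by (metis zero_le_mult_iff zero_less_power2 order.strict_iff_not)
  then show "0 \<le> b2"
    using h2 by (intro tendsto_lowerbound[of h2 b2 "at 0"]) (auto simp: eventually_at_filter)
qed

definition gram :: "nat \<Rightarrow> (nat \<Rightarrow> nat \<Rightarrow> real) \<Rightarrow> nat \<Rightarrow> nat \<Rightarrow> real" where
  "gram N A x y = (\<Sum>b<N. A b x * A b y)"

definition inner_k_variation ::
  "nat \<Rightarrow> (nat \<Rightarrow> nat \<Rightarrow> real) \<Rightarrow> (nat \<Rightarrow> nat \<Rightarrow> real) \<Rightarrow> nat \<Rightarrow> nat \<Rightarrow> real" where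
  "inner_k_variation k g e x y = (\<Sum>j<k. e x j * g y j + g x j * e y j)"

definition gram_approx_error ::
  "nat \<Rightarrow> nat \<Rightarrow> nat \<Rightarrow> (nat \<Rightarrow> nat \<Rightarrow> real) \<Rightarrow> (nat \<Rightarrow> nat \<Rightarrow> real) \<Rightarrow> real" where
  "gram_approx_error N L k A g = (\<Sum>x<L. \<Sum>y<L. (gram N A x y - inner_k k g x y)^2)"

lemma gram_commute: "gram N A x y = gram N A y x"
  unfolding gram_def by (simp add: mult.commute)

lemma inner_k_commute: "inner_k k g x y = inner_k k g y x"
  unfolding inner_k_def by (simp add: mult.commute)

lemma inner_k_perturb:
  "inner_k k (\<lambda>x j. g x j + t * e x j) x y
     = inner_k k g x y + t * inner_k_variation k g e x y + t^2 * inner_k k e x y"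
  unfolding inner_k_def inner_k_variation_def
  by (simp add: sum.distrib sum_distrib_left algebra_simps power2_eq_square)

lemma gram_approx_error_perturb:
  fixes N L k :: nat and A g e :: "nat \<Rightarrow> nat \<Rightarrow> real" and t :: real
  defines "R \<equiv> \<lambda>x y. gram N A x y - inner_k k g x y" and "C \<equiv> inner_k_variation k g e"
  shows "gram_approx_error N L k A (\<lambda>x j. g x j + t * e x j) - gram_approx_error N L k A g =
    (-2 * (\<Sum>x<L. \<Sum>y<L. R x y * C x y)) * t
    + (\<Sum>x<L. \<Sum>y<L. (C x y)^2 - 2 * R x y * inner_k k e x y) * t^2
    + (2 * (\<Sum>x<L. \<Sum>y<L. C x y * inner_k k e x y)) * t^3
    + (\<Sum>x<L. \<Sum>y<L. (inner_k k e x y)^2) * t^4"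
proof -
  have quartic: "(gram N A x y - inner_k k (\<lambda>x j. g x j + t * e x j) x y)^2 - (R x y)^2
     = (-2 * (R x y * C x y)) * t + ((C x y)^2 - 2 * R x y * inner_k k e x y) * t^2
       + (2 * (C x y * inner_k k e x y)) * t^3 + (inner_k k e x y)^2 * t^4" for x y
    unfolding inner_k_perturb R_def C_def
    by (simp add: power2_eq_square power3_eq_cube power4_eq_xxxx algebra_simps)
  have "gram_approx_error N L k A (\<lambda>x j. g x j + t * e x j) - gram_approx_error N L k A g
      = (\<Sum>x<L. \<Sum>y<L. (gram N A x y - inner_k k (\<lambda>x j. g x j + t * e x j) x y)^2 - (R x y)^2)"
    unfolding gram_approx_error_def R_def by (simp add: sum_subtractf)
  also have "\<dots> = (\<Sum>x<L. \<Sum>y<L. (-2 * (R x y * C x y)) * t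
      + ((C x y)^2 - 2 * R x y * inner_k k e x y) * t^2
      + (2 * (C x y * inner_k k e x y)) * t^3 + (inner_k k e x y)^2 * t^4)"
    by (simp only: quartic)
  finally show ?thesis
    by (simp add: sum.distrib sum_subtractf sum_negf sum_distrib_left sum_distrib_right left_diff_distrib)
qed

lemma sum_square_symmetrized_product:
  fixes r u :: "'a \<Rightarrow> real"
  shows "(\<Sum>x\<in>X. \<Sum>y\<in>X. (r x * u y + u x * r y)^2)
     = 2 * ((\<Sum>x\<in>X. r x * r x) * (\<Sum>x\<in>X. u x * u x) + (\<Sum>x\<in>X. r x * u x)^2)"
proof -
  have "(\<Sum>x\<in>X. \<Sum>y\<in>X. (r x * u y + u x * r y)^2)
      = (\<Sum>x\<in>X. \<Sum>y\<in>X. (r x * r x) * (u y * u y) + 2 * ((r x * u x) * (r y * u y))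
           + (u x * u x) * (r y * r y))"
    by (simp add: power2_eq_square algebra_simps)
  also have "\<dots> = (\<Sum>x\<in>X. r x * r x) * (\<Sum>y\<in>X. u y * u y)
      + 2 * ((\<Sum>x\<in>X. r x * u x) * (\<Sum>y\<in>X. r y * u y)) + (\<Sum>x\<in>X. u x * u x) * (\<Sum>y\<in>X. r y * r y)"
    by (simp only: sum.distrib sum_distrib_left[symmetric] sum_product)
  finally show ?thesis by (simp add: power2_eq_square algebra_simps)
qed

lemma gram_image_norms:
  fixes A :: "nat \<Rightarrow> nat \<Rightarrow> real"
  shows "(\<Sum>b<N. (\<Sum>x<L. A b x * u x)^2) = (\<Sum>x<L. u x * (\<Sum>y<L. gram N A x y * u y))"
    and "(\<Sum>x<L. (\<Sum>b<N. A b x * (\<Sum>y<L. A b y * u y))^2) = (\<Sum>x<L. (\<Sum>y<L. gram N A x y * u y)^2)"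
proof -
  show "(\<Sum>b<N. (\<Sum>x<L. A b x * u x)^2) = (\<Sum>x<L. u x * (\<Sum>y<L. gram N A x y * u y))"
    unfolding gram_def gram_bilinear_form by (simp add: power2_eq_square)
  have "(\<Sum>b<N. A b x * (\<Sum>y<L. A b y * u y)) = (\<Sum>y<L. gram N A x y * u y)" for x
    unfolding gram_def by (simp add: sum_distrib_left sum_distrib_right mult_ac sum.swap[of _ "{..<N}"])
  then show "(\<Sum>x<L. (\<Sum>b<N. A b x * (\<Sum>y<L. A b y * u y))^2) = (\<Sum>x<L. (\<Sum>y<L. gram N A x y * u y)^2)"
    by simp
qed

lemma sum_product_gram:
  fixes B :: "'y \<Rightarrow> 'j \<Rightarrow> real"
  shows "(\<Sum>y\<in>Y. (\<Sum>i\<in>J. B y i * a i) * (\<Sum>j\<in>J. B y j * c j))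
     = (\<Sum>i\<in>J. a i * (\<Sum>j\<in>J. (\<Sum>y\<in>Y. B y i * B y j) * c j))"
proof -
  have "(\<Sum>y\<in>Y. (\<Sum>i\<in>J. B y i * a i) * (\<Sum>j\<in>J. B y j * c j))
      = (\<Sum>y\<in>Y. \<Sum>i\<in>J. \<Sum>j\<in>J. a i * (B y i * B y j * c j))"
    by (simp add: sum_product mult_ac)
  also have "\<dots> = (\<Sum>i\<in>J. \<Sum>j\<in>J. \<Sum>y\<in>Y. a i * (B y i * B y j * c j))"
    by (subst sum.swap) (simp only: sum.swap[of _ Y J])
  also have "\<dots> = (\<Sum>i\<in>J. a i * (\<Sum>j\<in>J. (\<Sum>y\<in>Y. B y i * B y j) * c j))"
    by (simp add: sum_distrib_left sum_distrib_right mult_ac)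
  finally show ?thesis .
qed

text \<open>The direction of the Courant-Fischer min-max principle that is needed below: it holds
  when \<open>lam\<close> is at least the square of the \<open>(k+1)\<close>-th singular value of the \<open>N \<times> L\<close> matrix \<open>A\<close>.
  The combination is only required to have a nonzero coefficient, so the \<open>k + 1\<close> given vectors
  may be dependent.\<close>

definition min_max_bound :: "nat \<Rightarrow> nat \<Rightarrow> nat \<Rightarrow> (nat \<Rightarrow> nat \<Rightarrow> real) \<Rightarrow> real \<Rightarrow> bool" where
  "min_max_bound N L k A lam \<longleftrightarrow> (\<forall>w :: nat \<Rightarrow> nat \<Rightarrow> real. \<exists>\<alpha>. (\<exists>s<Suc k. \<alpha> s \<noteq> 0) \<and>
     (\<Sum>x<L. (\<Sum>b<N. A b x * (\<Sum>s<Suc k. \<alpha> s * w s b))^2)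
       \<le> lam * (\<Sum>b<N. (\<Sum>s<Suc k. \<alpha> s * w s b)^2))"

locale gram_approx_minimizer =
  fixes N L k :: nat and A g :: "nat \<Rightarrow> nat \<Rightarrow> real"
  assumes minimal: "\<And>g'. gram_approx_error N L k A g \<le> gram_approx_error N L k A g'"
begin

abbreviation residual :: "nat \<Rightarrow> nat \<Rightarrow> real" where
  "residual x y \<equiv> gram N A x y - inner_k k g x y"

lemma residual_commute: "residual x y = residual y x"
  using gram_commute inner_k_commute by metis

lemma stationary: "(\<Sum>x<L. \<Sum>y<L. residual x y * inner_k_variation k g e x y) = 0"
  and second_variation_nonneg:
    "0 \<le> (\<Sum>x<L. \<Sum>y<L. (inner_k_variation k g e x y)^2 - 2 * residual x y * inner_k k e x y)"
proof -
  have "\<And>t. 0 \<le> (-2 * (\<Sum>x<L. \<Sum>y<L. residual x y * inner_k_variation k g e x y)) * t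
    + (\<Sum>x<L. \<Sum>y<L. (inner_k_variation k g e x y)^2 - 2 * residual x y * inner_k k e x y) * t^2
    + (2 * (\<Sum>x<L. \<Sum>y<L. inner_k_variation k g e x y * inner_k k e x y)) * t^3
    + (\<Sum>x<L. \<Sum>y<L. (inner_k k e x y)^2) * t^4"
    using minimal gram_approx_error_perturb[where N = N and L = L and k = k and A = A and g = g and e = e]
    by (metis diff_ge_0_iff_ge)
  from nonneg_quartic_coeffs[OF this]
  show "(\<Sum>x<L. \<Sum>y<L. residual x y * inner_k_variation k g e x y) = 0"
    and "0 \<le> (\<Sum>x<L. \<Sum>y<L. (inner_k_variation k g e x y)^2 - 2 * residual x y * inner_k k e x y)"
    by auto
qed

lemma residual_annihilates_factor:
  assumes "x0 < L" and "j0 < k"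
  shows "(\<Sum>y<L. residual x0 y * g y j0) = 0"
proof -
  \<comment> \<open>vary the single entry \<open>g x0 j0\<close>\<close>
  define e where "e x j = (if x = x0 \<and> j = j0 then 1 else (0::real))" for x j
  have "inner_k_variation k g e x y = (if x = x0 then g y j0 else 0) + (if y = x0 then g x j0 else 0)"
    for x y
    unfolding inner_k_variation_def e_def sum.distrib using \<open>j0 < k\<close>
    by (simp add: if_distrib[of "\<lambda>z. z * _"] if_distrib[of "\<lambda>z. _ * z"] cong: if_cong)
  moreover have "(\<Sum>y<L. if x = x0 then h y else 0) = (if x = x0 then \<Sum>y<L. h y else 0)"
    for x and h :: "nat \<Rightarrow> real"
    by simp
  ultimately have "(\<Sum>x<L. \<Sum>y<L. residual x y * inner_k_variation k g e x y)
      = (\<Sum>y<L. residual x0 y * g y j0) + (\<Sum>x<L. residual x x0 * g x j0)"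
    using \<open>x0 < L\<close> by (simp add: distrib_left sum.distrib if_distrib[of "\<lambda>z. _ * z"] cong: if_cong)
  also have "\<dots> = 2 * (\<Sum>y<L. residual x0 y * g y j0)"
    using residual_commute by simp
  finally show ?thesis using stationary[of e] by simp
qed

lemma residual_eigenvector_orthogonal_factor:
  assumes r: "\<forall>x<L. (\<Sum>y<L. residual x y * r y) = \<rho> * r x" and "\<rho> \<noteq> 0" and "j < k"
  shows "(\<Sum>x<L. g x j * r x) = 0"
proof -
  have "\<rho> * (\<Sum>x<L. g x j * r x) = (\<Sum>x<L. g x j * (\<Sum>y<L. residual x y * r y))"
    using r by (simp add: sum_distrib_left mult_ac)
  also have "\<dots> = (\<Sum>x<L. r x * (\<Sum>y<L. residual x y * g y j))"
    by (rule symmetric_bilinear_commute) (rule residual_commute)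
  also have "\<dots> = 0"
    using residual_annihilates_factor \<open>j < k\<close> by simp
  finally show ?thesis using \<open>\<rho> \<noteq> 0\<close> by simp
qed

lemma residual_eigenvector_gram:
  assumes r: "\<forall>x<L. (\<Sum>y<L. residual x y * r y) = \<rho> * r x" and "\<rho> \<noteq> 0" and "x < L"
  shows "(\<Sum>y<L. gram N A x y * r y) = \<rho> * r x"
proof -
  have "(\<Sum>y<L. inner_k k g x y * r y) = (\<Sum>j<k. g x j * (\<Sum>y<L. g y j * r y))"
    unfolding inner_k_def
    by (simp add: sum_distrib_left sum_distrib_right mult_ac sum.swap[of _ "{..<L}"])
  also have "\<dots> = 0"
    using residual_eigenvector_orthogonal_factor[OF r \<open>\<rho> \<noteq> 0\<close>] by simp
  finally have "(\<Sum>y<L. inner_k k g x y * r y) = 0" .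
  moreover have "(\<Sum>y<L. gram N A x y * r y)
      = (\<Sum>y<L. residual x y * r y) + (\<Sum>y<L. inner_k k g x y * r y)"
    by (simp add: sum.distrib[symmetric] algebra_simps)
  ultimately show ?thesis using r \<open>x < L\<close> by simp
qed

lemma residual_eigenvalue_nonneg:
  assumes r: "\<forall>x<L. (\<Sum>y<L. residual x y * r y) = \<rho> * r x" and unit: "(\<Sum>x<L. r x * r x) = 1"
  shows "\<rho> \<ge> 0"
proof (cases "\<rho> = 0")
  case False
  have "\<rho> = (\<Sum>x<L. r x * (\<rho> * r x))"
    using unit by (simp add: sum_distrib_left[symmetric] mult_ac)
  also have "\<dots> = (\<Sum>x<L. r x * (\<Sum>y<L. gram N A x y * r y))"
    using residual_eigenvector_gram[OF r False] by simp
  also have "\<dots> = (\<Sum>b<N. (\<Sum>x<L. A b x * r x)^2)"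
    by (rule gram_image_norms(1)[symmetric])
  also have "\<dots> \<ge> 0" by (intro sum_nonneg) auto
  finally show ?thesis .
qed simp

lemma residual_eigenvalue_factor_bound:
  assumes r: "\<forall>x<L. (\<Sum>y<L. residual x y * r y) = \<rho> * r x" and unit: "(\<Sum>x<L. r x * r x) = 1"
    and "\<rho> \<noteq> 0"
  shows "\<rho> * (\<Sum>j<k. c j * c j) \<le> (\<Sum>x<L. (\<Sum>j<k. g x j * c j)^2)"
proof -
  \<comment> \<open>second variation in the direction \<open>e x j = r x * c j\<close>\<close>
  define e where "e x j = r x * c j" for x j
  define u where "u x = (\<Sum>j<k. g x j * c j)" for x
  define cc where "cc = (\<Sum>j<k. c j * c j)"
  have "(\<Sum>x<L. r x * u x) = (\<Sum>j<k. c j * (\<Sum>x<L. g x j * r x))"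
    unfolding u_def by (simp add: sum_distrib_left sum_distrib_right mult_ac sum.swap[of _ "{..<L}"])
  also have "\<dots> = 0"
    using residual_eigenvector_orthogonal_factor[OF r \<open>\<rho> \<noteq> 0\<close>] by simp
  finally have "(\<Sum>x<L. \<Sum>y<L. (inner_k_variation k g e x y)^2) = 2 * (\<Sum>x<L. u x * u x)"
    using sum_square_symmetrized_product[of r u "{..<L}"] unit
    unfolding inner_k_variation_def e_def u_def
    by (simp add: sum.distrib sum_distrib_left mult_ac)
  moreover have "(\<Sum>x<L. \<Sum>y<L. 2 * residual x y * inner_k k e x y) = 2 * cc * \<rho>"
  proof -
    have "inner_k k e x y = cc * (r x * r y)" for x y
      unfolding inner_k_def e_def cc_def by (simp add: sum_distrib_left mult_ac)
    then have "(\<Sum>x<L. \<Sum>y<L. 2 * residual x y * inner_k k e x y)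
        = (\<Sum>x<L. \<Sum>y<L. 2 * cc * (r x * (residual x y * r y)))"
      by (simp add: mult_ac)
    also have "\<dots> = 2 * cc * (\<Sum>x<L. r x * (\<Sum>y<L. residual x y * r y))"
      by (simp only: sum_distrib_left)
    also have "\<dots> = 2 * cc * \<rho>"
      using r unit by (simp add: sum_distrib_left[symmetric] mult_ac)
    finally show ?thesis .
  qed
  ultimately show ?thesis
    using second_variation_nonneg[of e] unfolding sum_subtractf cc_def u_def
    by (simp add: power2_eq_square mult_ac)
qed

lemma gram_apply_eigenvector_plus_factor:
  assumes r: "\<forall>x<L. (\<Sum>y<L. residual x y * r y) = \<rho> * r x" and "\<rho> \<noteq> 0" and "x < L"
  shows "(\<Sum>y<L. gram N A x y * (a0 * r y + (\<Sum>j<k. g y j * c j)))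
    = a0 * \<rho> * r x + (\<Sum>i<k. g x i * (\<Sum>j<k. (\<Sum>y<L. g y i * g y j) * c j))"
proof -
  define Gc where "Gc y = (\<Sum>j<k. g y j * c j)" for y
  have "(\<Sum>y<L. residual x y * Gc y) = (\<Sum>j<k. c j * (\<Sum>y<L. residual x y * g y j))"
    unfolding Gc_def by (simp add: sum_distrib_left sum_distrib_right mult_ac sum.swap[of _ "{..<L}"])
  then have residual: "(\<Sum>y<L. residual x y * Gc y) = 0"
    using residual_annihilates_factor \<open>x < L\<close> by simp
  have "(\<Sum>y<L. inner_k k g x y * Gc y) = (\<Sum>y<L. (\<Sum>i<k. g y i * g x i) * (\<Sum>j<k. g y j * c j))"
    unfolding inner_k_def Gc_def by (simp add: mult_ac)
  also have "\<dots> = (\<Sum>i<k. g x i * (\<Sum>j<k. (\<Sum>y<L. g y i * g y j) * c j))"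
    by (rule sum_product_gram)
  finally have factor: "(\<Sum>y<L. inner_k k g x y * Gc y)
      = (\<Sum>i<k. g x i * (\<Sum>j<k. (\<Sum>y<L. g y i * g y j) * c j))" .
  have "(\<Sum>y<L. gram N A x y * (a0 * r y + Gc y))
      = a0 * (\<Sum>y<L. gram N A x y * r y) + (\<Sum>y<L. residual x y * Gc y)
        + (\<Sum>y<L. inner_k k g x y * Gc y)"
    by (simp add: sum.distrib[symmetric] sum_distrib_left algebra_simps)
  then show ?thesis
    using residual factor residual_eigenvector_gram[OF r \<open>\<rho> \<noteq> 0\<close> \<open>x < L\<close>]
    unfolding Gc_def by simp
qed

lemma eigenvector_plus_factor_norms:
  fixes a0 :: real and c :: "nat \<Rightarrow> real"
  assumes r: "\<forall>x<L. (\<Sum>y<L. residual x y * r y) = \<rho> * r x" and unit: "(\<Sum>x<L. r x * r x) = 1"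
    and "\<rho> \<noteq> 0"
  defines "u \<equiv> \<lambda>y. a0 * r y + (\<Sum>j<k. g y j * c j)"
    and "d \<equiv> \<lambda>i. \<Sum>j<k. (\<Sum>y<L. g y i * g y j) * c j"
  shows "(\<Sum>x<L. (\<Sum>y<L. gram N A x y * u y)^2) = a0^2 * \<rho>^2 + (\<Sum>x<L. (\<Sum>i<k. g x i * d i)^2)"
    and "(\<Sum>x<L. u x * (\<Sum>y<L. gram N A x y * u y)) = a0^2 * \<rho> + (\<Sum>i<k. d i * d i)"
proof -
  define Gc where "Gc x = (\<Sum>j<k. g x j * c j)" for x
  define Gd where "Gd x = (\<Sum>i<k. g x i * d i)" for x
  have Mu: "(\<Sum>y<L. gram N A x y * u y) = a0 * \<rho> * r x + Gd x" if "x < L" for x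
    unfolding u_def Gd_def d_def using gram_apply_eigenvector_plus_factor[OF r \<open>\<rho> \<noteq> 0\<close> that] .
  have orth: "(\<Sum>x<L. r x * (\<Sum>j<k. g x j * b j)) = 0" for b
  proof -
    have "(\<Sum>x<L. r x * (\<Sum>j<k. g x j * b j)) = (\<Sum>j<k. b j * (\<Sum>x<L. g x j * r x))"
      by (simp add: sum_distrib_left sum_distrib_right mult_ac sum.swap[of _ "{..<L}"])
    then show ?thesis
      using residual_eigenvector_orthogonal_factor[OF r \<open>\<rho> \<noteq> 0\<close>] by simp
  qed
  have "(\<Sum>x<L. (\<Sum>y<L. gram N A x y * u y)^2) = (\<Sum>x<L. (a0 * \<rho> * r x + Gd x)^2)"
    using Mu by simp
  also have "\<dots> = (a0 * \<rho>)^2 * (\<Sum>x<L. r x * r x) + 2 * (a0 * \<rho>) * (\<Sum>x<L. r x * Gd x)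
      + (\<Sum>x<L. (Gd x)^2)"
    by (simp add: power2_eq_square algebra_simps sum.distrib sum_distrib_left)
  finally show "(\<Sum>x<L. (\<Sum>y<L. gram N A x y * u y)^2) = a0^2 * \<rho>^2 + (\<Sum>x<L. (Gd x)^2)"
    using unit orth[of d] unfolding Gd_def by (simp add: power_mult_distrib)
  have "(\<Sum>x<L. Gc x * Gd x) = (\<Sum>i<k. d i * d i)"
    using sum_product_gram[where B = g and a = d and c = c and Y = "{..<L}" and J = "{..<k}"] unfolding Gc_def Gd_def d_def by (simp add: mult_ac)
  moreover have "(\<Sum>x<L. u x * (\<Sum>y<L. gram N A x y * u y)) = (\<Sum>x<L. (a0 * r x + Gc x) * (a0 * \<rho> * r x + Gd x))"
    using Mu unfolding u_def Gc_def by simp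
  moreover have "\<dots> = a0^2 * \<rho> * (\<Sum>x<L. r x * r x) + a0 * (\<Sum>x<L. r x * Gd x)
      + a0 * \<rho> * (\<Sum>x<L. r x * Gc x) + (\<Sum>x<L. Gc x * Gd x)"
    by (simp add: power2_eq_square algebra_simps sum.distrib sum_distrib_left)
  ultimately show "(\<Sum>x<L. u x * (\<Sum>y<L. gram N A x y * u y)) = a0^2 * \<rho> + (\<Sum>i<k. d i * d i)"
    using unit orth[of c] orth[of d] unfolding Gc_def Gd_def by simp
qed

lemma eigenvector_plus_factor_norm_pos:
  assumes r: "\<forall>x<L. (\<Sum>y<L. residual x y * r y) = \<rho> * r x" and unit: "(\<Sum>x<L. r x * r x) = 1"
    and "0 < \<rho>" and nonzero: "a0 \<noteq> 0 \<or> (\<exists>j<k. c j \<noteq> 0)"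
  defines "d \<equiv> \<lambda>i. \<Sum>j<k. (\<Sum>y<L. g y i * g y j) * c j"
  shows "0 < a0^2 * \<rho> + (\<Sum>i<k. d i * d i)"
proof (cases "a0 = 0")
  case True
  then obtain j where "j < k" "c j \<noteq> 0" using nonzero by blast
  then have "0 < \<rho> * (\<Sum>j<k. c j * c j)"
    using sum_squares_pos[of j k c] \<open>0 < \<rho>\<close> by simp
  also have "\<dots> \<le> (\<Sum>x<L. (\<Sum>j<k. g x j * c j)^2)"
    using residual_eigenvalue_factor_bound[OF r unit] \<open>0 < \<rho>\<close> by simp
  also have "\<dots> = (\<Sum>i<k. c i * d i)"
    unfolding d_def power2_eq_square by (rule sum_product_gram)
  finally have "\<exists>i<k. d i \<noteq> 0"
    by (metis (no_types, lifting) lessThan_iff mult_zero_right sum.neutral less_irrefl)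
  then show ?thesis using True sum_squares_pos by auto
next
  case False
  then show ?thesis
    using \<open>0 < \<rho>\<close> by (intro add_pos_nonneg) (auto intro: sum_nonneg)
qed

lemma residual_eigenvalue_le:
  assumes r: "\<forall>x<L. (\<Sum>y<L. residual x y * r y) = \<rho> * r x" and unit: "(\<Sum>x<L. r x * r x) = 1"
    and "0 < \<rho>" and bound: "min_max_bound N L k A lam"
  shows "\<rho> \<le> lam"
proof -
  have "\<rho> \<noteq> 0" using \<open>0 < \<rho>\<close> by simp
  \<comment> \<open>test the bound on the images under \<open>A\<close> of \<open>r\<close> and of the \<open>k\<close> columns of \<open>g\<close>\<close>
  define w where "w s b = (if s = 0 then (\<Sum>x<L. A b x * r x) else (\<Sum>x<L. A b x * g x (s - 1)))"
    for s b
  obtain \<alpha> where \<alpha>: "\<exists>s<Suc k. \<alpha> s \<noteq> 0"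
    and le: "(\<Sum>x<L. (\<Sum>b<N. A b x * (\<Sum>s<Suc k. \<alpha> s * w s b))^2)
      \<le> lam * (\<Sum>b<N. (\<Sum>s<Suc k. \<alpha> s * w s b)^2)"
    using bound unfolding min_max_bound_def by blast
  define c where "c j = \<alpha> (Suc j)" for j
  define u where "u y = \<alpha> 0 * r y + (\<Sum>j<k. g y j * c j)" for y
  define d where "d i = (\<Sum>j<k. (\<Sum>y<L. g y i * g y j) * c j)" for i
  have z: "(\<Sum>s<Suc k. \<alpha> s * w s b) = (\<Sum>x<L. A b x * u x)" for b
    unfolding sum.lessThan_Suc_shift w_def u_def c_def
    by (simp add: sum_distrib_left distrib_left sum.distrib mult_ac sum.swap[of _ "{..<k}"])
  have "(\<Sum>x<L. (\<Sum>y<L. gram N A x y * u y)^2) \<le> lam * (\<Sum>x<L. u x * (\<Sum>y<L. gram N A x y * u y))"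
    using le unfolding z gram_image_norms(2) gram_image_norms(1)[where N = N and A = A] .
  then have le': "\<alpha> 0^2 * \<rho>^2 + (\<Sum>x<L. (\<Sum>i<k. g x i * d i)^2) \<le> lam * (\<alpha> 0^2 * \<rho> + (\<Sum>i<k. d i * d i))"
    using eigenvector_plus_factor_norms[OF r unit \<open>\<rho> \<noteq> 0\<close>, of "\<alpha> 0" c]
    unfolding u_def d_def by simp
  have "\<rho> * (\<Sum>i<k. d i * d i) \<le> (\<Sum>x<L. (\<Sum>i<k. g x i * d i)^2)"
    by (rule residual_eigenvalue_factor_bound[OF r unit \<open>\<rho> \<noteq> 0\<close>])
  with le' have "\<rho> * (\<alpha> 0^2 * \<rho> + (\<Sum>i<k. d i * d i)) \<le> lam * (\<alpha> 0^2 * \<rho> + (\<Sum>i<k. d i * d i))"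
    by (simp add: power2_eq_square algebra_simps)
  moreover have "\<alpha> 0 \<noteq> 0 \<or> (\<exists>j<k. c j \<noteq> 0)"
    using \<alpha> unfolding c_def by (metis less_Suc_eq_0_disj)
  then have "0 < \<alpha> 0^2 * \<rho> + (\<Sum>i<k. d i * d i)"
    unfolding d_def by (rule eigenvector_plus_factor_norm_pos[OF r unit \<open>0 < \<rho>\<close>])
  ultimately show ?thesis by simp
qed

theorem residual_quadratic_form_bounds:
  assumes bound: "min_max_bound N L k A lam" and "0 \<le> lam"
  shows "0 \<le> (\<Sum>x<L. v x * (\<Sum>y<L. residual x y * v y))"
    and "(\<Sum>x<L. v x * (\<Sum>y<L. residual x y * v y)) \<le> lam * (\<Sum>x<L. v x * v x)"
proof -
  obtain q \<rho> where q: "orthonormal L L q"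
    and eig: "\<forall>i<L. \<forall>a<L. (\<Sum>b<L. residual a b * q i b) = \<rho> i * q i a"
    using symmetric_spectral_decomposition[of L residual] residual_commute by blast
  have \<rho>: "0 \<le> \<rho> i \<and> \<rho> i \<le> lam" if "i < L" for i
  proof -
    have eig_i: "\<forall>x<L. (\<Sum>y<L. residual x y * q i y) = \<rho> i * q i x" using eig that by auto
    have unit: "(\<Sum>x<L. q i x * q i x) = 1" using q that unfolding orthonormal_def by auto
    show ?thesis
      using residual_eigenvalue_nonneg[OF eig_i unit] residual_eigenvalue_le[OF eig_i unit _ bound]
        \<open>0 \<le> lam\<close> by force
  qed
  show "0 \<le> (\<Sum>x<L. v x * (\<Sum>y<L. residual x y * v y))"
    unfolding orthonormal_quadratic_form[OF q eig] using \<rho> by (intro sum_nonneg) auto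
  have "(\<Sum>i<L. \<rho> i * (\<Sum>a<L. q i a * v a)^2) \<le> (\<Sum>i<L. lam * (\<Sum>a<L. q i a * v a)^2)"
    using \<rho> by (intro sum_mono mult_right_mono) auto
  then show "(\<Sum>x<L. v x * (\<Sum>y<L. residual x y * v y)) \<le> lam * (\<Sum>x<L. v x * v x)"
    unfolding orthonormal_quadratic_form[OF q eig] orthonormal_norm_square[OF q]
    by (simp add: sum_distrib_left)
qed

end

section \<open>The ACA-PC loss as a Gram approximation error\<close>

definition norm_aug_entry :: "nat \<Rightarrow> (nat \<Rightarrow> nat \<Rightarrow> real) \<Rightarrow> nat \<Rightarrow> nat \<Rightarrow> real" where
  "norm_aug_entry N P xb x = P xb x / sqrt (deg N P x)"

definition deg_scaled :: "nat \<Rightarrow> (nat \<Rightarrow> nat \<Rightarrow> real) \<Rightarrow> (nat \<Rightarrow> nat \<Rightarrow> real) \<Rightarrow> nat \<Rightarrow> nat \<Rightarrow> real" where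
  "deg_scaled N P f x j = sqrt (deg N P x) * f x j"

lemma norm_aug_feature_eq: "norm_aug_feature N L P = mat N L (\<lambda>(b, x). norm_aug_entry N P b x)"
proof (rule eq_matI)
  fix b x assume "b < dim_row (mat N L (\<lambda>(b, x). norm_aug_entry N P b x))"
    and "x < dim_col (mat N L (\<lambda>(b, x). norm_aug_entry N P b x))"
  then have "b < N" "x < L" by auto
  then have "norm_aug_feature N L P $$ (b, x)
      = (\<Sum>y<L. P b y * (if y = x then 1 / sqrt (deg N P y) else 0))"
    unfolding norm_aug_feature_def aug_feature_def
    by (auto simp: scalar_prod_def lessThan_atLeast0 intro!: sum.cong)
  also have "\<dots> = (\<Sum>y<L. if y = x then P b x / sqrt (deg N P x) else 0)"
    by (rule sum.cong) auto
  finally show "norm_aug_feature N L P $$ (b, x) = mat N L (\<lambda>(b, x). norm_aug_entry N P b x) $$ (b, x)"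
    using \<open>b < N\<close> \<open>x < L\<close> by (simp add: norm_aug_entry_def)
qed (auto simp: norm_aug_feature_def aug_feature_def)

lemma p_A_eq: "p_A N P x = deg N P x / N"
  unfolding p_A_def p_bar_def deg_def by (simp add: sum_divide_distrib)

lemma post_eq: "0 < N \<Longrightarrow> post N P xb x = P xb x / deg N P x"
  unfolding post_def p_bar_def p_A_eq by (simp add: field_simps)

lemma inner_k_deg_scaled:
  "inner_k k (deg_scaled N P f) x y = sqrt (deg N P x) * sqrt (deg N P y) * inner_k k f x y"
  unfolding inner_k_def deg_scaled_def by (simp add: sum_distrib_left mult_ac)

lemma sum_times_test_vector:
  fixes F :: "nat \<Rightarrow> real" and s1 s2 :: real
  assumes "x1 < L" "x2 < L" "x1 \<noteq> x2"
  shows "(\<Sum>x<L. F x * ((if x = x1 then 1 / s1 else 0) - (if x = x2 then 1 / s2 else 0)))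
    = F x1 / s1 - F x2 / s2"
  using assms by (simp add: right_diff_distrib sum_subtractf if_distrib[of "\<lambda>z. _ * z"] cong: if_cong)

lemma gram_form_difference:
  fixes F :: "'b \<Rightarrow> nat \<Rightarrow> real" and s1 s2 :: real
  assumes "x1 < L" "x2 < L" "x1 \<noteq> x2"
  defines "v \<equiv> \<lambda>x. (if x = x1 then 1 / s1 else 0) - (if x = x2 then 1 / s2 else 0)"
  shows "(\<Sum>x<L. v x * (\<Sum>y<L. (\<Sum>b\<in>B. F b x * F b y) * v y)) = (\<Sum>b\<in>B. (F b x1 / s1 - F b x2 / s2)^2)"
proof -
  have "(\<Sum>x<L. F b x * v x) = F b x1 / s1 - F b x2 / s2" for b
    unfolding v_def by (rule sum_times_test_vector[OF assms(1-3)])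
  then show ?thesis
    unfolding gram_bilinear_form by (simp add: power2_eq_square)
qed

context
  fixes N L :: nat and P :: "nat \<Rightarrow> nat \<Rightarrow> real"
  assumes deg_pos: "\<And>x. x < L \<Longrightarrow> deg N P x > 0"
begin

lemma loss_cross_term:
  "(\<Sum>xb<N. \<Sum>xi<L. \<Sum>xj<L. p_bar N xb * P xb xi * P xb xj * inner_k k f xi xj)
    = (\<Sum>xi<L. \<Sum>xj<L. gram N (norm_aug_entry N P) xi xj * inner_k k (deg_scaled N P f) xi xj) / N"
proof -
  have "P xb x = norm_aug_entry N P xb x * sqrt (deg N P x)" if "x < L" for xb x
    using deg_pos[OF that] unfolding norm_aug_entry_def by simp
  then have "(\<Sum>xb<N. \<Sum>xi<L. \<Sum>xj<L. p_bar N xb * P xb xi * P xb xj * inner_k k f xi xj)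
      = (\<Sum>xb<N. \<Sum>xi<L. \<Sum>xj<L. norm_aug_entry N P xb xi * norm_aug_entry N P xb xj
          * inner_k k (deg_scaled N P f) xi xj / N)"
    by (intro sum.cong refl) (simp add: inner_k_deg_scaled p_bar_def mult_ac)
  also have "\<dots> = (\<Sum>xi<L. \<Sum>xj<L. \<Sum>xb<N. norm_aug_entry N P xb xi * norm_aug_entry N P xb xj
          * inner_k k (deg_scaled N P f) xi xj / N)"
    by (subst sum.swap) (simp only: sum.swap[of _ "{..<N}" "{..<L}"])
  finally show ?thesis
    unfolding gram_def by (simp add: sum_distrib_right sum_divide_distrib)
qed

lemma loss_square_term:
  assumes "0 < N"
  shows "real N * (\<Sum>x1<L. \<Sum>x2<L. p_A N P x1 * p_A N P x2 * (inner_k k f x1 x2)^2)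
    = (\<Sum>x1<L. \<Sum>x2<L. (inner_k k (deg_scaled N P f) x1 x2)^2) / N"
proof -
  have "real N * (p_A N P x1 * p_A N P x2 * (inner_k k f x1 x2)^2)
      = (inner_k k (deg_scaled N P f) x1 x2)^2 / N" if "x1 < L" "x2 < L" for x1 x2
    using \<open>0 < N\<close> deg_pos[OF that(1)] deg_pos[OF that(2)]
    unfolding p_A_eq inner_k_deg_scaled by (simp add: power2_eq_square field_simps)
  then show ?thesis
    by (simp add: sum_distrib_left sum_divide_distrib)
qed

lemma loss_ACA_PC_eq_gram_approx_error:
  assumes "0 < N"
  shows "loss_ACA_PC N L k P f = (gram_approx_error N L k (norm_aug_entry N P) (deg_scaled N P f)
    - (\<Sum>x<L. \<Sum>y<L. (gram N (norm_aug_entry N P) x y)^2)) / N"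
proof -
  define M where "M = gram N (norm_aug_entry N P)"
  define K where "K = inner_k k (deg_scaled N P f)"
  have "gram_approx_error N L k (norm_aug_entry N P) (deg_scaled N P f)
      = (\<Sum>x<L. \<Sum>y<L. (M x y)^2) - 2 * (\<Sum>x<L. \<Sum>y<L. M x y * K x y) + (\<Sum>x<L. \<Sum>y<L. (K x y)^2)"
    unfolding gram_approx_error_def M_def K_def
    by (simp add: power2_eq_square algebra_simps sum.distrib sum_subtractf sum_distrib_left)
  then show ?thesis
    unfolding loss_ACA_PC_def loss_cross_term loss_square_term[OF assms] M_def[symmetric] K_def[symmetric]
    using assms by (simp add: field_simps)
qed

lemma loss_minimizer_gram_approx_minimizer:
  assumes "0 < N" and minimal: "\<And>g. loss_ACA_PC N L k P f \<le> loss_ACA_PC N L k P g"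
  shows "gram_approx_minimizer N L k (norm_aug_entry N P) (deg_scaled N P f)"
proof
  fix g' :: "nat \<Rightarrow> nat \<Rightarrow> real"
  define f' where "f' x j = g' x j / sqrt (deg N P x)" for x j
  have "inner_k k (deg_scaled N P f') x y = inner_k k g' x y" if "x < L" "y < L" for x y
    using deg_pos[OF that(1)] deg_pos[OF that(2)] unfolding inner_k_def deg_scaled_def f'_def by simp
  then have "gram_approx_error N L k (norm_aug_entry N P) (deg_scaled N P f')
      = gram_approx_error N L k (norm_aug_entry N P) g'"
    unfolding gram_approx_error_def by simp
  then show "gram_approx_error N L k (norm_aug_entry N P) (deg_scaled N P f)
      \<le> gram_approx_error N L k (norm_aug_entry N P) g'"
    using minimal[of f'] \<open>0 < N\<close>
    by (simp add: loss_ACA_PC_eq_gram_approx_error[OF \<open>0 < N\<close>] divide_le_cancel)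
qed

lemma test_vector_forms:
  fixes x1 x2 k :: nat and f :: "nat \<Rightarrow> nat \<Rightarrow> real"
  assumes "0 < N" "x1 < L" "x2 < L" "x1 \<noteq> x2"
  defines "v \<equiv> \<lambda>x. (if x = x1 then 1 / sqrt (deg N P x1) else 0) - (if x = x2 then 1 / sqrt (deg N P x2) else 0)"
  shows "(\<Sum>x<L. v x * (\<Sum>y<L. gram N (norm_aug_entry N P) x y * v y)) = d_post_sq N P x1 x2"
    and "(\<Sum>x<L. v x * (\<Sum>y<L. inner_k k (deg_scaled N P f) x y * v y)) = (\<Sum>j<k. (f x1 j - f x2 j)^2)"
    and "(\<Sum>x<L. v x * v x) \<le> 2 / Min (deg N P ` {..<L})"
proof -
  have d1: "sqrt (deg N P x1) * sqrt (deg N P x1) = deg N P x1" "deg N P x1 > 0"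
    and d2: "sqrt (deg N P x2) * sqrt (deg N P x2) = deg N P x2" "deg N P x2 > 0"
    using deg_pos[OF \<open>x1 < L\<close>] deg_pos[OF \<open>x2 < L\<close>] by auto
  show "(\<Sum>x<L. v x * (\<Sum>y<L. gram N (norm_aug_entry N P) x y * v y)) = d_post_sq N P x1 x2"
    unfolding gram_def v_def gram_form_difference[OF assms(2-4)] d_post_sq_def post_eq[OF \<open>0 < N\<close>]
    using d1 d2 by (simp add: norm_aug_entry_def field_simps)
  show "(\<Sum>x<L. v x * (\<Sum>y<L. inner_k k (deg_scaled N P f) x y * v y)) = (\<Sum>j<k. (f x1 j - f x2 j)^2)"
    unfolding inner_k_def v_def gram_form_difference[OF assms(2-4)]
    using d1 d2 by (simp add: deg_scaled_def)
  define dmin where "dmin = Min (deg N P ` {..<L})"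
  have "dmin \<in> deg N P ` {..<L}"
    unfolding dmin_def using \<open>x1 < L\<close> by (intro Min_in) auto
  then have "0 < dmin" using deg_pos by auto
  moreover have "dmin \<le> deg N P x1" "dmin \<le> deg N P x2"
    unfolding dmin_def using \<open>x1 < L\<close> \<open>x2 < L\<close> by auto
  ultimately have "1 / deg N P x1 \<le> 1 / dmin" "1 / deg N P x2 \<le> 1 / dmin"
    by (auto intro!: divide_left_mono)
  moreover have "(\<Sum>x<L. v x * v x) = 1 / deg N P x1 + 1 / deg N P x2"
    using assms(2-4) d1 d2 unfolding v_def sum_times_test_vector[OF assms(2-4)] by (simp add: field_simps)
  ultimately show "(\<Sum>x<L. v x * v x) \<le> 2 / Min (deg N P ` {..<L})"
    unfolding dmin_def[symmetric] by simp
qed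

end

section \<open>Singular values and the min-max bound\<close>

lemma min_max_bound_eigenbasis:
  fixes A vq :: "nat \<Rightarrow> nat \<Rightarrow> real" and l :: "nat \<Rightarrow> real"
  assumes vq: "orthonormal N N vq"
    and eig: "\<forall>i<N. \<forall>a<N. (\<Sum>b<N. (\<Sum>x<L. A a x * A b x) * vq i b) = l i * vq i a"
    and p: "p permutes {..<N}" and small: "\<And>j. j < N \<Longrightarrow> k \<le> j \<Longrightarrow> l (p j) \<le> lam"
  shows "min_max_bound N L k A lam"
  unfolding min_max_bound_def
proof
  fix w :: "nat \<Rightarrow> nat \<Rightarrow> real"
  \<comment> \<open>a nontrivial combination orthogonal to the eigenvectors \<open>vq (p t)\<close>, \<open>t < k\<close>\<close>
  obtain \<alpha> where \<alpha>: "\<exists>s<Suc k. \<alpha> s \<noteq> 0"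
    and orth: "\<forall>t<k. (\<Sum>s<Suc k. (\<Sum>b<N. vq (p t) b * w s b) * \<alpha> s) = 0"
    using exists_nonzero_kernel_vector[of k "Suc k" "\<lambda>t s. \<Sum>b<N. vq (p t) b * w s b"] by auto
  define z where "z b = (\<Sum>s<Suc k. \<alpha> s * w s b)" for b
  define cz where "cz i = (\<Sum>a<N. vq i a * z a)" for i
  have "cz (p t) = 0" if "t < k" for t
  proof -
    have "cz (p t) = (\<Sum>s<Suc k. \<Sum>b<N. vq (p t) b * (\<alpha> s * w s b))"
      unfolding cz_def z_def by (rule sum_mult_sum_swap)
    also have "\<dots> = (\<Sum>s<Suc k. (\<Sum>b<N. vq (p t) b * w s b) * \<alpha> s)"
      by (simp add: sum_distrib_left sum_distrib_right mult_ac)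
    finally show ?thesis using orth that by simp
  qed
  then have "l i * (cz i)^2 \<le> lam * (cz i)^2" if "i < N" for i
  proof -
    have "i \<in> p ` {..<N}" using permutes_image[OF p] that by simp
    then obtain j where "j < N" "p j = i" by auto
    then show ?thesis
      using small \<open>\<And>t. t < k \<Longrightarrow> cz (p t) = 0\<close> by (cases "j < k") (auto intro: mult_right_mono)
  qed
  then have "(\<Sum>i<N. l i * (cz i)^2) \<le> lam * (\<Sum>i<N. (cz i)^2)"
    unfolding sum_distrib_left by (intro sum_mono) simp
  moreover have "(\<Sum>x<L. (\<Sum>b<N. A b x * z b)^2) = (\<Sum>i<N. l i * (cz i)^2)"
  proof -
    have "(\<Sum>x<L. (\<Sum>b<N. A b x * z b)^2) = (\<Sum>b<N. z b * (\<Sum>c<N. (\<Sum>x<L. A b x * A c x) * z c))"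
      using gram_bilinear_form[where u = z and w = z and F = "\<lambda>x b. A b x" and X = "{..<N}" and Y = "{..<N}" and B = "{..<L}"]
      by (simp add: power2_eq_square)
    then show ?thesis unfolding cz_def orthonormal_quadratic_form[OF vq eig] .
  qed
  moreover have "(\<Sum>b<N. (z b)^2) = (\<Sum>i<N. (cz i)^2)"
    unfolding cz_def power2_eq_square[of "z _"] by (rule orthonormal_norm_square[OF vq])
  ultimately have "(\<Sum>x<L. (\<Sum>b<N. A b x * z b)^2) \<le> lam * (\<Sum>b<N. (z b)^2)"
    by simp
  then show "\<exists>\<alpha>. (\<exists>s<Suc k. \<alpha> s \<noteq> 0) \<and>
      (\<Sum>x<L. (\<Sum>b<N. A b x * (\<Sum>s<Suc k. \<alpha> s * w s b))^2) \<le> lam * (\<Sum>b<N. (\<Sum>s<Suc k. \<alpha> s * w s b)^2)"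
    using \<alpha> unfolding z_def by (intro exI[of _ \<alpha>] conjI)
qed

lemma singular_values_eigenbasis:
  fixes a vq :: "nat \<Rightarrow> nat \<Rightarrow> real" and l :: "nat \<Rightarrow> real"
  assumes "N \<le> L" and vq: "orthonormal N N vq"
    and eig: "\<forall>i<N. \<forall>b<N. (\<Sum>c<N. (\<Sum>x<L. a b x * a c x) * vq i c) = l i * vq i b"
  shows "singular_values (mat N L (\<lambda>(b, x). a b x)) = map sqrt (rev (sort (map l [0..<N])))"
proof -
  define Ahat where "Ahat = mat N L (\<lambda>(b, x). a b x)"
  have dims: "dim_row Ahat = N" "dim_col Ahat = L" unfolding Ahat_def by auto
  have "Ahat * transpose_mat Ahat = mat N N (\<lambda>(b, c). \<Sum>x<L. a b x * a c x)"
    unfolding Ahat_def by (rule eq_matI) (auto simp: scalar_prod_def lessThan_atLeast0 intro!: sum.cong)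
  moreover have "char_poly (mat N N (\<lambda>(b, c). \<Sum>x<L. a b x * a c x)) = (\<Prod>i\<leftarrow>[0..<N]. [:- l i, 1:])"
    by (rule char_poly_orthonormal_eigenbasis[OF vq eig])
  moreover have "proots (\<Prod>i\<leftarrow>[0..<N]. [:- l i, 1:]) = mset (map l [0..<N])"
  proof -
    have "0 \<notin> set (map (\<lambda>i. [:- l i, 1:]) [0..<N])" by auto
    from proots_prod_list[OF this]
    have "proots (\<Prod>i\<leftarrow>[0..<N]. [:- l i, 1:]) = sum_list (map (\<lambda>i. {#l i#}) [0..<N])"
      by (simp add: comp_def)
    also have "\<dots> = mset (map l [0..<N])"
      by (induction N) auto
    finally show ?thesis .
  qed
  ultimately show ?thesis
    unfolding singular_values_def Ahat_def[symmetric] Let_def dims using \<open>N \<le> L\<close>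
    by (simp only: if_True sorted_list_of_multiset_mset)
qed

theorem min_max_bound_singular_value:
  fixes a :: "nat \<Rightarrow> nat \<Rightarrow> real"
  assumes "N \<le> L" and "k < N"
  shows "min_max_bound N L k a ((singular_values (mat N L (\<lambda>(b, x). a b x)) ! k)^2)"
proof -
  define S where "S b c = (\<Sum>x<L. a b x * a c x)" for b c
  obtain vq l where vq: "orthonormal N N vq" and eig: "\<forall>i<N. \<forall>b<N. (\<Sum>c<N. S b c * vq i c) = l i * vq i b"
    using symmetric_spectral_decomposition[of N S] unfolding S_def by (auto simp: mult.commute)
  have l_nonneg: "0 \<le> l i" if "i < N" for i
  proof -
    have "l i = (\<Sum>b<N. vq i b * (\<Sum>c<N. S b c * vq i c))"
      using vq eig that unfolding orthonormal_def by (simp add: sum_distrib_left[symmetric] mult_ac)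
    also have "\<dots> = (\<Sum>x<L. (\<Sum>b<N. a b x * vq i b)^2)"
      unfolding S_def gram_bilinear_form[where F = "\<lambda>x b. a b x"] by (simp add: power2_eq_square)
    finally show ?thesis by (simp add: sum_nonneg)
  qed
  define ls where "ls = rev (sort (map l [0..<N]))"
  have sv: "singular_values (mat N L (\<lambda>(b, x). a b x)) = map sqrt ls"
    unfolding ls_def using singular_values_eigenbasis[OF \<open>N \<le> L\<close> vq] eig unfolding S_def by simp
  have "mset ls = mset (map l [0..<N])" unfolding ls_def by simp
  then obtain p where p: "p permutes {..<N}" and ls: "permute_list p (map l [0..<N]) = ls"
    by (metis mset_eq_permutation length_map length_upt diff_zero)
  have ls_p: "ls ! j = l (p j)" if "j < N" for j
    using permute_list_nth[of p "map l [0..<N]" j] p ls that permutes_in_image[OF p, of j] by simp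
  have "ls ! j \<le> ls ! k" if "k \<le> j" "j < N" for j
    unfolding ls_def using that \<open>k < N\<close>
    by (simp add: rev_nth sorted_nth_mono[OF sorted_sort])
  then have "min_max_bound N L k a (ls ! k)"
    using eig ls_p unfolding S_def by (intro min_max_bound_eigenbasis[OF vq _ p]) auto
  moreover have "(map sqrt ls ! k)^2 = ls ! k"
    using ls_p[OF \<open>k < N\<close>] l_nonneg permutes_in_image[OF p, of k] \<open>k < N\<close>
    by (simp add: ls_def)
  ultimately show ?thesis unfolding sv by simp
qed

theorem theorem4p2:
  fixes N L k :: nat and P :: "nat \<Rightarrow> nat \<Rightarrow> real" and fstar :: "nat \<Rightarrow> nat \<Rightarrow> real"
  assumes "N < L"
    and "1 \<le> k" and "k < N"
    and "\<And>xb x. xb < N \<Longrightarrow> x < L \<Longrightarrow> P xb x \<ge> 0"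
    and "\<And>xb. xb < N \<Longrightarrow> (\<Sum>x<L. P xb x) = 1"
    and "\<And>x. x < L \<Longrightarrow> deg N P x > 0"
    and "\<And>g. loss_ACA_PC N L k P fstar \<le> loss_ACA_PC N L k P g"
    and "x1 < L" and "x2 < L"
  shows "d_post_sq N P x1 x2
           - 2 * (singular_values (norm_aug_feature N L P) ! k)^2
               / Min (deg N P ` {..<L}) * (if x1 = x2 then 0 else 1)
         \<le> (\<Sum>j<k. (fstar x1 j - fstar x2 j)^2)
       \<and> (\<Sum>j<k. (fstar x1 j - fstar x2 j)^2) \<le> d_post_sq N P x1 x2"
proof (cases "x1 = x2")
  case True
  then show ?thesis unfolding d_post_sq_def by simp
next
  case False
  note deg_pos = assms(6) and x = assms(8,9) False
  have "0 < N" using \<open>k < N\<close> by simp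
  interpret gram_approx_minimizer N L k "norm_aug_entry N P" "deg_scaled N P fstar"
    by (rule loss_minimizer_gram_approx_minimizer[OF deg_pos \<open>0 < N\<close> assms(7)])
  define lam where "lam = (singular_values (norm_aug_feature N L P) ! k)^2"
  have "min_max_bound N L k (norm_aug_entry N P) lam"
    unfolding lam_def norm_aug_feature_eq using \<open>N < L\<close> \<open>k < N\<close> by (intro min_max_bound_singular_value) auto
  note bounds = residual_quadratic_form_bounds[OF this, unfolded lam_def, OF zero_le_power2]
  define v where "v x = (if x = x1 then 1 / sqrt (deg N P x1) else 0)
    - (if x = x2 then 1 / sqrt (deg N P x2) else 0)" for x
  note forms = test_vector_forms[OF deg_pos \<open>0 < N\<close> x, folded v_def]
  have residual: "(\<Sum>x<L. v x * (\<Sum>y<L. residual x y * v y))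
      = d_post_sq N P x1 x2 - (\<Sum>j<k. (fstar x1 j - fstar x2 j)^2)"
    using forms(1) forms(2)[of k fstar]
    by (simp add: right_diff_distrib left_diff_distrib sum_subtractf)
  have "lam * (\<Sum>x<L. v x * v x) \<le> lam * (2 / Min (deg N P ` {..<L}))"
    unfolding lam_def by (rule mult_left_mono[OF forms(3) zero_le_power2])
  then show ?thesis
    using bounds[of v] False unfolding residual lam_def[symmetric] by auto
qed

end
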